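(* Let $S_1 = A_3^*$ be the set of nonnegative integers whose base-$3$ expansion contains no digit $2$, and for $n\ge 2$ let $S_n$ be the set of positive integers $k$ such that $v_p(k)\in S_{n-1}$ for each prime $p\mid k$. Then for each $n$, $S_n$ has lower uniform density $0$.
   Context: The lower uniform density of $A\subseteq\mathbb{N}$ is $\underline{u}(A) = \lim_{s\to\infty} \min_{n\ge 0} \frac{1}{s}\,\#\{a\in A : n < a \le n+s\}$. *)

theory Defs
  imports Complex_Main "HOL-Computational_Algebra.Primes"
begin

text \<open>Lower uniform density of a set of naturals:
  lim_{s->oo} min_{n>=0} (1/s) #{a in A. n < a <= n+s}.
  The min over n is rendered as INF (it is attained since the values lie in a finite set).\<close>
definition window_min :: "nat set \<Rightarrow> nat \<Rightarrow> real" where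
  "window_min A s = (INF n::nat. real (card {a \<in> A. n < a \<and> a \<le> n + s}) / real s)"

definition has_lower_uniform_density :: "nat set \<Rightarrow> real \<Rightarrow> bool" where
  "has_lower_uniform_density A d \<longleftrightarrow> (window_min A \<longlongrightarrow> d) sequentially"

definition A3 :: "nat set" where
  "A3 = {k. \<forall>i::nat. (k div 3 ^ i) mod 3 \<noteq> 2}"

text \<open>S n for n >= 1 (S 0 is a dummy, set equal to A3).\<close>
fun S :: "nat \<Rightarrow> nat set" where
  "S 0 = A3"
| "S (Suc 0) = A3"
| "S (Suc (Suc n)) =
     {k. k > 0 \<and> (\<forall>p. prime p \<and> p dvd k \<longrightarrow> multiplicity p k \<in> S (Suc n))}"

end

theory Submission
  imports Defs "HOL-Number_Theory.Cong"
begin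

text \<open>Each S n has arbitrarily long gaps, which forces lower uniform density 0.
  For S 1 = A3 the block (2\<cdot>3^s, 2\<cdot>3^s + s] consists of numbers with leading ternary digit 2.
  For n \<ge> 2 pick any m \<ge> 1 outside S (n - 1) (for example 2, 2^2, 2^2^2, \<dots>); by the
  Chinese remainder theorem there is a block of s consecutive integers, the i-th of which
  is divisible by exactly the m-th power of its own prime p_i, so none of them lies in S n.\<close>

definition has_arbitrarily_long_gaps :: "nat set \<Rightarrow> bool" where
  "has_arbitrarily_long_gaps A \<longleftrightarrow> (\<forall>s. \<exists>n. \<forall>a. n < a \<and> a \<le> n + s \<longrightarrow> a \<notin> A)"

lemma window_min_eq_0_if_gap:
  assumes "\<forall>a. n < a \<and> a \<le> n + s \<longrightarrow> a \<notin> A"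
  shows "window_min A s = 0"
proof -
  let ?f = "\<lambda>n::nat. real (card {a \<in> A. n < a \<and> a \<le> n + s}) / real s"
  have "{a \<in> A. n < a \<and> a \<le> n + s} = {}"
    using assms by auto
  have "bdd_below (range ?f)"
    by (rule bdd_belowI2[where m = 0]) simp
  then have "(INF m. ?f m) \<le> ?f n"
    by (rule cINF_lower) simp
  also have "\<dots> = 0"
    using \<open>{a \<in> A. n < a \<and> a \<le> n + s} = {}\<close> by simp
  finally have "(INF m. ?f m) \<le> 0" .
  moreover have "(INF m. ?f m) \<ge> 0"
    by (rule cINF_greatest) auto
  ultimately show ?thesis
    unfolding window_min_def by linarith
qed

lemma lower_uniform_density_0_if_gaps:
  assumes "has_arbitrarily_long_gaps A"
  shows "has_lower_uniform_density A 0"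
proof -
  have "window_min A = (\<lambda>_. 0)"
    using assms window_min_eq_0_if_gap unfolding has_arbitrarily_long_gaps_def by blast
  then show ?thesis
    unfolding has_lower_uniform_density_def by simp
qed

lemma A3_has_arbitrarily_long_gaps: "has_arbitrarily_long_gaps A3"
  unfolding has_arbitrarily_long_gaps_def
proof (intro allI exI impI)
  fix s a :: nat
  assume a: "2 * 3 ^ s < a \<and> a \<le> 2 * 3 ^ s + s"
  have "s < 3 ^ s"
    by (induct s) auto
  with a have "a < 3 * 3 ^ s"
    by linarith
  with a have "a div 3 ^ s = 2"
    by (simp add: div_nat_eqI)
  then show "a \<notin> A3"
    unfolding A3_def by (auto intro!: exI[of _ s])
qed

lemma multiplicity_eq_if_cong_prime_power:
  fixes p a m :: nat
  assumes "prime p" and cong: "[a = p ^ m] (mod p ^ Suc m)"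
  shows "multiplicity p a = m"
proof (rule multiplicity_eqI)
  have "[a = p ^ m] (mod p ^ m)"
    by (rule cong_dvd_modulus_nat[OF cong]) simp
  then show "p ^ m dvd a"
    by (simp add: cong_dvd_iff)
  have "\<not> p ^ Suc m dvd p ^ m"
    using prime_gt_1_nat[OF \<open>prime p\<close>] by (simp add: nat_dvd_not_less)
  then show "\<not> p ^ Suc m dvd a"
    using cong_dvd_iff[OF cong] by blast
qed

lemma exists_window_with_prime_multiplicity:
  fixes m s :: nat
  shows "\<exists>x. \<forall>a. x < a \<and> a \<le> x + s \<longrightarrow> (\<exists>p. prime p \<and> multiplicity p a = m)"
proof -
  obtain q :: "nat \<Rightarrow> nat" where "inj q" and q_prime: "\<And>i. prime (q i)"
    using infinite_countable_subset[OF primes_infinite] by blast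
  \<comment> \<open>u i is q i ^ m - i modulo q i ^ Suc m, written without truncated subtraction\<close>
  define u where "u i = q i ^ m + i * (q i ^ Suc m - 1)" for i
  have "\<forall>i\<in>{1..s}. \<forall>j\<in>{1..s}. i \<noteq> j \<longrightarrow> coprime (q i ^ Suc m) (q j ^ Suc m)"
    using q_prime inj_eq[OF \<open>inj q\<close>] by (simp add: primes_coprime)
  then obtain x where x: "\<forall>i\<in>{1..s}. [x = u i] (mod q i ^ Suc m)"
    using chinese_remainder_nat[of "{1..s}" "\<lambda>i. q i ^ Suc m" u] by blast
  show ?thesis
  proof (rule exI[of _ x], intro allI impI)
    fix a
    assume "x < a \<and> a \<le> x + s"
    then obtain i where i: "i \<in> {1..s}" "a = x + i"
      by (intro that[of "a - x"]) auto
    have "[a = u i + i] (mod q i ^ Suc m)"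
      using x i by (simp add: cong_add_rcancel_nat)
    also have "u i + i = q i ^ m + i * q i ^ Suc m"
    proof -
      have "q i ^ Suc m > 0"
        using prime_gt_0_nat[OF q_prime[of i]] by simp
      then obtain k where "q i ^ Suc m = Suc k"
        using gr0_implies_Suc by blast
      then show ?thesis
        unfolding u_def by simp
    qed
    also have "[\<dots> = q i ^ m] (mod q i ^ Suc m)"
      by (simp add: cong_def)
    finally have "[a = q i ^ m] (mod q i ^ Suc m)" .
    then show "\<exists>p. prime p \<and> multiplicity p a = m"
      using q_prime multiplicity_eq_if_cong_prime_power by blast
  qed
qed

lemma multiplicity_restricted_has_arbitrarily_long_gaps:
  fixes m :: nat and T :: "nat set"
  assumes "m \<ge> 1" and "m \<notin> T"
  shows "has_arbitrarily_long_gaps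
           {k. k > 0 \<and> (\<forall>p. prime p \<and> p dvd k \<longrightarrow> multiplicity p k \<in> T)}"
  unfolding has_arbitrarily_long_gaps_def
proof
  fix s :: nat
  obtain x where x: "\<forall>a. x < a \<and> a \<le> x + s \<longrightarrow> (\<exists>p. prime p \<and> multiplicity p a = m)"
    using exists_window_with_prime_multiplicity by blast
  show "\<exists>n. \<forall>a. n < a \<and> a \<le> n + s \<longrightarrow>
      a \<notin> {k. k > 0 \<and> (\<forall>p. prime p \<and> p dvd k \<longrightarrow> multiplicity p k \<in> T)}"
  proof (rule exI[of _ x], intro allI impI)
    fix a
    assume "x < a \<and> a \<le> x + s"
    then obtain p where "prime p" and mult: "multiplicity p a = m"
      using x by blast
    moreover have "p dvd a"
      using not_dvd_imp_multiplicity_0[of p a] mult \<open>m \<ge> 1\<close> by auto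
    ultimately show "a \<notin> {k. k > 0 \<and> (\<forall>p. prime p \<and> p dvd k \<longrightarrow> multiplicity p k \<in> T)}"
      using \<open>m \<notin> T\<close> by blast
  qed
qed

lemma prime_power_not_in_S:
  fixes p m :: nat
  assumes "prime p" and "m \<ge> 1" and "m \<notin> S (Suc n)"
  shows "p ^ m \<notin> S (Suc (Suc n))"
proof
  assume "p ^ m \<in> S (Suc (Suc n))"
  then have "\<forall>q. prime q \<and> q dvd p ^ m \<longrightarrow> multiplicity q (p ^ m) \<in> S (Suc n)"
    by simp
  moreover have "p dvd p ^ m"
    using \<open>m \<ge> 1\<close> by (simp add: dvd_power)
  ultimately have "multiplicity p (p ^ m) \<in> S (Suc n)"
    using \<open>prime p\<close> by blast
  with assms show False
    by simp
qed

lemma exists_pos_not_in_S: "n \<ge> 1 \<Longrightarrow> \<exists>m \<ge> 1. m \<notin> S n"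
proof (induction n rule: S.induct)
  case 2
  have "(2::nat) \<notin> A3"
    unfolding A3_def by (auto intro!: exI[of _ 0])
  then show ?case
    by (intro exI[of _ 2]) simp
next
  case (3 n)
  then obtain m where "m \<ge> 1" "m \<notin> S (Suc n)"
    by auto
  then have "2 ^ m \<notin> S (Suc (Suc n))"
    using prime_power_not_in_S[OF two_is_prime_nat] by blast
  moreover have "(1::nat) \<le> 2 ^ m"
    by simp
  ultimately show ?case
    by blast
qed simp

theorem mainTheorem9:
  fixes n :: nat
  assumes "n \<ge> 1"
  shows "has_lower_uniform_density (S n) 0"
proof (rule lower_uniform_density_0_if_gaps)
  show "has_arbitrarily_long_gaps (S n)"
  proof (cases n rule: S.cases)
    case 1
    with assms show ?thesis
      by simp
  next
    case 2
    then show ?thesis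
      using A3_has_arbitrarily_long_gaps by simp
  next
    case (3 k)
    obtain m where "m \<ge> 1" "m \<notin> S (Suc k)"
      using exists_pos_not_in_S[of "Suc k"] by auto
    then have "has_arbitrarily_long_gaps (S (Suc (Suc k)))"
      unfolding S.simps by (rule multiplicity_restricted_has_arbitrarily_long_gaps)
    with \<open>n = Suc (Suc k)\<close> show ?thesis
      by simp
  qed
qed

end
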